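(* Consider the Markov chain $X^N$ described in the context and let $t_c=1/\lambda$. For any $0<\delta<1$, with probability at least $1-e^{-\frac{\mu p_1}{K e}\frac{\delta^2}{2}N}$ it holds that \[ X^N_1(t_c)\ \ge\ (1-\delta)\frac{\mu p_1}{K e}N . \]
   Context: Learning dynamics: there are $K\ge 2$ arms; each pull of arm $k\in\{1,\dots,K\}$ yields an independent Bernoulli$(p_k)$ reward, where $1\ge p_1>p_2\ge\cdots\ge p_K\ge 0$; a "null arm" $0$ always yields reward $0$. There are $N$ individuals, each with an independent Poisson clock of rate $\lambda>0$ and a memory $M\in\{0,1,\dots,K\}$, initially $M=0$. Fix $\mu\in(0,1]$. When an individual's clock ticks, it selects $c\in\{0,\dots,K\}$: if its $M=0$, with probability $\mu$ it sets $c$ uniformly at random in $\{1,\dots,K\}$, and with probability $1-\mu$ it picks a peer uniformly at random among all $N$ individuals (including itself) and sets $c$ to that peer's memory; if $M\neq 0$, it always sets $c$ to the memory of a uniformly random peer (including itself). It pulls arm $c$, and if the reward is $1$ sets $M\leftarrow c$. $X^N_k(t)$ denotes the number of individuals with memory $k$ at time $t$; $e$ is Euler's number. *)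

theory Defs
  imports "HOL-Probability.Probability"
begin

text \<open>Configuration: memory of individual i (for i < N) is m i; arms 1..K, null arm 0.\<close>
type_synonym config = "nat \<Rightarrow> nat"

definition choice_pmf :: "nat \<Rightarrow> nat \<Rightarrow> real \<Rightarrow> config \<Rightarrow> nat \<Rightarrow> nat pmf" where
  "choice_pmf N K \<mu> m i =
     (let peer = map_pmf m (pmf_of_set {..<N}) in
      if m i = 0 then
        bind_pmf (bernoulli_pmf \<mu>) (\<lambda>b. if b then pmf_of_set {1..K} else peer)
      else peer)"

definition tick_pmf :: "nat \<Rightarrow> nat \<Rightarrow> real \<Rightarrow> (nat \<Rightarrow> real) \<Rightarrow> config \<Rightarrow> nat \<Rightarrow> config pmf" where
  "tick_pmf N K \<mu> p m i =
     bind_pmf (choice_pmf N K \<mu> m i) (\<lambda>c.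
       bind_pmf (if c = 0 then return_pmf False else bernoulli_pmf (p c)) (\<lambda>r.
         return_pmf (if r then m(i := c) else m)))"

text \<open>One jump of the uniformised chain: the next ticking clock belongs to a uniformly
  random individual (all N clocks have the same rate).\<close>
definition jump_pmf :: "nat \<Rightarrow> nat \<Rightarrow> real \<Rightarrow> (nat \<Rightarrow> real) \<Rightarrow> config \<Rightarrow> config pmf" where
  "jump_pmf N K \<mu> p m = bind_pmf (pmf_of_set {..<N}) (tick_pmf N K \<mu> p m)"

definition init_config :: config where
  "init_config = (\<lambda>_. 0)"

definition jumps_pmf :: "nat \<Rightarrow> nat \<Rightarrow> real \<Rightarrow> (nat \<Rightarrow> real) \<Rightarrow> nat \<Rightarrow> config pmf" where
  "jumps_pmf N K \<mu> p n = ((\<lambda>D. bind_pmf D (jump_pmf N K \<mu> p)) ^^ n) (return_pmf init_config)"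

text \<open>Law of the configuration at time t: the number of ticks of the N independent
  rate-lam Poisson clocks during [0,t] is Poisson(N rate t), each tick belonging to a
  uniformly random individual, independently.\<close>
definition config_at :: "nat \<Rightarrow> nat \<Rightarrow> real \<Rightarrow> (nat \<Rightarrow> real) \<Rightarrow> real \<Rightarrow> real \<Rightarrow> config pmf" where
  "config_at N K \<mu> p rate t = bind_pmf (poisson_pmf (real N * rate * t)) (jumps_pmf N K \<mu> p)"

definition Xcount :: "nat \<Rightarrow> nat \<Rightarrow> config \<Rightarrow> nat" where
  "Xcount N k m = card {i. i < N \<and> m i = k}"

end

theory Submission
  imports Defs "HOL-Complex_Analysis.Complex_Analysis"
begin

(* Tag every individual with the number of ticks of its clock and let G count the individuals whose
   clock ticked exactly once and whose memory is 1, so that X_1 >= G.  At its first tick an individual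
   has empty memory, so it explores arm 1 and is rewarded with probability at least r = mu p_1 / K,
   whatever the others do.  Hence, tick by tick, E[(1 - delta)^G] is dominated by the same quantity
   for a comparison chain in which a first tick makes an individual good with probability exactly r
   and a second tick makes it lost.  For the comparison chain the value after k uniformly distributed
   ticks is the k-th derivative at 0 of (e^x - r delta x)^z (e^x - delta)^g e^(w x), divided by N^k,
   so averaging over the Poisson(N) number of ticks up to time 1/lambda sums its Taylor series at 1:
   the result is (1 - r delta / e)^N <= exp (- r delta N / e).  A Chernoff bound with base 1 - delta
   and delta + (1 - delta) ln (1 - delta) >= delta^2 / 2 finish the proof. *)

lemma integrable_measure_pmf_bounded:
  fixes f :: "'a \<Rightarrow> real"
  assumes "\<And>x. \<bar>f x\<bar> \<le> B"
  shows "integrable (measure_pmf M) f"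
  by (rule measure_pmf.integrable_const_bound[where B=B]) (auto intro!: AE_I2 simp: assms)

lemma integral_measure_pmf_le_bound:
  fixes f :: "'a \<Rightarrow> real"
  assumes "\<And>x. L \<le> f x" "\<And>x. f x \<le> B"
  shows "integral\<^sup>L (measure_pmf M) f \<le> B"
proof (rule measure_pmf.integral_le_const)
  show "integrable (measure_pmf M) f"
    by (rule integrable_measure_pmf_bounded[where B="\<bar>L\<bar> + \<bar>B\<bar>"])
       (use assms in \<open>smt (verit)\<close>)
qed (simp add: assms)

lemma integral_measure_pmf_ge_bound:
  fixes f :: "'a \<Rightarrow> real"
  assumes "\<And>x. L \<le> f x" "\<And>x. f x \<le> B"
  shows "L \<le> integral\<^sup>L (measure_pmf M) f"
  using integral_measure_pmf_le_bound[where f="\<lambda>x. - f x" and L="-B" and B="-L" and M=M] assms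
  by auto

lemma integral_measure_pmf_mono:
  fixes f g :: "'a \<Rightarrow> real"
  assumes "\<And>x. x \<in> set_pmf M \<Longrightarrow> f x \<le> g x" "\<And>x. \<bar>f x\<bar> \<le> B" "\<And>x. \<bar>g x\<bar> \<le> B"
  shows "integral\<^sup>L (measure_pmf M) f \<le> integral\<^sup>L (measure_pmf M) g"
  using assms by (intro integral_mono_AE integrable_measure_pmf_bounded) (auto simp: AE_measure_pmf_iff)

lemma integral_bind_pmf_bounded:
  fixes f :: "'b \<Rightarrow> real"
  assumes "\<And>x. \<bar>f x\<bar> \<le> B"
  shows "integral\<^sup>L (bind_pmf M N) f = (\<integral>x. integral\<^sup>L (N x) f \<partial>M)"
proof -
  have "(\<lambda>x. measure_pmf (N x)) \<in> measurable (measure_pmf M) (subprob_algebra (count_space UNIV))"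
    using measurable_measure_pmf[of N] by (simp add: measurable_cong_sets)
  then show ?thesis
    unfolding measure_pmf_bind using assms
    by (intro integral_bind[where K="count_space UNIV" and B=B and B'=1])
       (auto simp: measure_pmf.finite_measure measure_pmf.emeasure_space_1)
qed

lemma integral_return_pmf_real: "integral\<^sup>L (return_pmf x) (f :: 'a \<Rightarrow> real) = f x"
  by (subst integral_measure_pmf_real[of "{x}"]) auto

lemma prob_less_le_power_moment:
  fixes f :: "'a \<Rightarrow> nat" and \<beta> a :: real
  assumes "0 < \<beta>" "\<beta> < 1"
  shows "measure_pmf.prob M {x. real (f x) < a} \<le> (\<integral>x. \<beta> ^ f x \<partial>M) / \<beta> powr a"
proof -
  have markov: "indicator {x. real (f x) < a} x \<le> \<beta> ^ f x / \<beta> powr a" for x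
  proof (cases "real (f x) < a")
    case True
    then have "\<beta> powr a \<le> \<beta> powr real (f x)"
      using assms by (intro powr_mono') auto
    then show ?thesis using True assms by (simp add: powr_realpow)
  qed (use assms in simp)
  have moment_bound: "\<bar>\<beta> ^ f x / \<beta> powr a\<bar> \<le> 1 / \<beta> powr a + 1" for x
  proof -
    have "\<beta> ^ f x / \<beta> powr a \<le> 1 / \<beta> powr a"
      using assms by (intro divide_right_mono power_le_one) auto
    then show ?thesis using assms by simp
  qed
  have "measure_pmf.prob M {x. real (f x) < a} = (\<integral>x. indicator {x. real (f x) < a} x \<partial>M)"
    by simp
  also have "\<dots> \<le> (\<integral>x. \<beta> ^ f x / \<beta> powr a \<partial>M)"
    by (intro integral_measure_pmf_mono[where B="1 / \<beta> powr a + 1"])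
       (use assms markov moment_bound in \<open>force simp: indicator_def\<close>)+
  finally show ?thesis by simp
qed

lemma entropy_lower_bound:
  fixes \<delta> :: real
  assumes "0 \<le> \<delta>" "\<delta> < 1"
  shows "\<delta>\<^sup>2 / 2 \<le> \<delta> + (1 - \<delta>) * ln (1 - \<delta>)"
proof -
  define g where "g t = t + (1 - t) * ln (1 - t) - t\<^sup>2 / 2" for t :: real
  have "g 0 \<le> g \<delta>"
  proof (rule DERIV_nonneg_imp_nondecreasing[OF assms(1)])
    fix t assume t: "0 \<le> t" "t \<le> \<delta>"
    then have "(g has_real_derivative - ln (1 - t) - t) (at t)"
      unfolding g_def using assms by (auto intro!: derivative_eq_intros)
    moreover have "0 \<le> - ln (1 - t) - t"
      using ln_le_minus_one[of "1 - t"] t assms by simp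
    ultimately show "\<exists>y. (g has_real_derivative y) (at t) \<and> 0 \<le> y" by blast
  qed
  then show ?thesis unfolding g_def by simp
qed

definition comparison_gf :: "real \<Rightarrow> real \<Rightarrow> nat \<Rightarrow> nat \<Rightarrow> nat \<Rightarrow> complex \<Rightarrow> complex" where
  "comparison_gf r d z g w x =
     (exp x - of_real (r * d) * x) ^ z * (exp x - of_real d) ^ g * exp (of_nat w * x)"

lemma holomorphic_on_comparison_gf [holomorphic_intros]: "comparison_gf r d z g w holomorphic_on S"
  unfolding comparison_gf_def by (intro holomorphic_intros)

lemma comparison_gf_has_field_derivative:
  "(comparison_gf r d z g w has_field_derivative
     of_nat z * (of_real r * comparison_gf r d (z - 1) (g + 1) w x
                 + of_real (1 - r) * comparison_gf r d (z - 1) g (w + 1) x)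
     + of_nat g * comparison_gf r d z (g - 1) (w + 1) x + of_nat w * comparison_gf r d z g w x) (at x)"
proof -
  define A where "A = exp x - of_real (r * d) * x"
  define B where "B = exp x - (of_real d :: complex)"
  define E where "E = exp (of_nat w * x)"
  have gf: "comparison_gf r d z' g' w' x = A ^ z' * B ^ g' * exp (of_nat w' * x)" for z' g' w'
    unfolding comparison_gf_def A_def B_def ..
  have E_Suc: "exp (of_nat (w + 1) * x) = E * exp x"
    unfolding E_def by (simp add: distrib_right exp_add)
  have derivative: "(comparison_gf r d z g w has_field_derivative
      of_nat z * A ^ (z - 1) * (exp x - of_real (r * d)) * B ^ g * E
      + A ^ z * (of_nat g * B ^ (g - 1) * exp x) * E + A ^ z * B ^ g * (E * of_nat w)) (at x)"
    unfolding comparison_gf_def A_def B_def E_def by (auto intro!: derivative_eq_intros) (simp add: algebra_simps)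
  have untouched: "of_nat z * A ^ (z - 1) * (exp x - of_real (r * d)) * B ^ g * E
      = of_nat z * (of_real r * comparison_gf r d (z - 1) (g + 1) w x
          + of_real (1 - r) * comparison_gf r d (z - 1) g (w + 1) x)"
    unfolding gf E_Suc E_def[symmetric] by (simp add: B_def algebra_simps)
  have good: "A ^ z * (of_nat g * B ^ (g - 1) * exp x) * E = of_nat g * comparison_gf r d z (g - 1) (w + 1) x"
    unfolding gf E_Suc E_def[symmetric] by (simp add: algebra_simps)
  have lost: "A ^ z * B ^ g * (E * of_nat w) = of_nat w * comparison_gf r d z g w x"
    unfolding gf E_def[symmetric] by (simp add: algebra_simps)
  show ?thesis using derivative unfolding untouched good lost .
qed

lemma higher_deriv_Suc_comparison_gf:
  "(deriv ^^ Suc k) (comparison_gf r d z g w) x =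
     of_nat z * (of_real r * (deriv ^^ k) (comparison_gf r d (z - 1) (g + 1) w) x
                 + of_real (1 - r) * (deriv ^^ k) (comparison_gf r d (z - 1) g (w + 1)) x)
     + of_nat g * (deriv ^^ k) (comparison_gf r d z (g - 1) (w + 1)) x
     + of_nat w * (deriv ^^ k) (comparison_gf r d z g w) x"
proof -
  have "deriv (comparison_gf r d z g w) = (\<lambda>x.
     of_nat z * (of_real r * comparison_gf r d (z - 1) (g + 1) w x
                 + of_real (1 - r) * comparison_gf r d (z - 1) g (w + 1) x)
     + of_nat g * comparison_gf r d z (g - 1) (w + 1) x + of_nat w * comparison_gf r d z g w x)"
    using DERIV_imp_deriv[OF comparison_gf_has_field_derivative] by blast
  then show ?thesis
    by (simp add: funpow_Suc_right higher_deriv_add[where S=UNIV] higher_deriv_cmult[where A=UNIV]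
                  holomorphic_intros del: funpow.simps)
qed

text \<open>\<open>comparison_mgf r d N k z g w\<close> is the expectation of \<open>(1 - d) ^ G\<close> after \<open>k\<close> ticks of
  uniformly chosen individuals among \<open>N = z + g + w\<close> (\<open>z\<close> untouched, \<open>G = g\<close> good, \<open>w\<close> lost) for
  the comparison chain in which an untouched individual becomes good with probability \<open>r\<close> and lost
  otherwise, and a good individual becomes lost (see \<open>comparison_mgf_Suc\<close>).\<close>

definition comparison_mgf :: "real \<Rightarrow> real \<Rightarrow> nat \<Rightarrow> nat \<Rightarrow> nat \<Rightarrow> nat \<Rightarrow> nat \<Rightarrow> real" where
  "comparison_mgf r d N k z g w = Re ((deriv ^^ k) (comparison_gf r d z g w) 0) / real N ^ k"

lemma comparison_mgf_0: "comparison_mgf r d N 0 z g w = (1 - d) ^ g"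
  by (simp add: comparison_mgf_def comparison_gf_def flip: of_real_diff of_real_power)

lemma comparison_mgf_Suc:
  assumes "N \<ge> 1"
  shows "comparison_mgf r d N (Suc k) z g w =
    (real z * (r * comparison_mgf r d N k (z - 1) (g + 1) w + (1 - r) * comparison_mgf r d N k (z - 1) g (w + 1))
     + real g * comparison_mgf r d N k z (g - 1) (w + 1) + real w * comparison_mgf r d N k z g w) / real N"
  using assms unfolding comparison_mgf_def higher_deriv_Suc_comparison_gf by (simp add: field_simps)

lemma comparison_mgf_bounds:
  assumes "N \<ge> 1" "0 \<le> r" "r \<le> 1" "0 \<le> d" "d \<le> 1" "z + g + w = N"
  shows "0 \<le> comparison_mgf r d N k z g w \<and> comparison_mgf r d N k z g w \<le> 1"
  using assms(6)
proof (induction k arbitrary: z g w)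
  case 0
  then show ?case using assms by (simp add: comparison_mgf_0 power_le_one)
next
  case (Suc k)
  define a where "a = (if z = 0 then 0 else comparison_mgf r d N k (z - 1) (g + 1) w)"
  define b where "b = (if z = 0 then 0 else comparison_mgf r d N k (z - 1) g (w + 1))"
  define c where "c = (if g = 0 then 0 else comparison_mgf r d N k z (g - 1) (w + 1))"
  define e where "e = comparison_mgf r d N k z g w"
  have unit: "0 \<le> a \<and> a \<le> 1" "0 \<le> b \<and> b \<le> 1" "0 \<le> c \<and> c \<le> 1" "0 \<le> e \<and> e \<le> 1"
    unfolding a_def b_def c_def e_def using Suc by auto
  have convex: "0 \<le> r * a + (1 - r) * b \<and> r * a + (1 - r) * b \<le> 1"
    using unit assms(2,3) by (auto intro: convex_bound_le)
  have "real z * (r * a + (1 - r) * b) + real g * c + real w * e \<le> real N"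
    unfolding Suc.prems[symmetric] of_nat_add
    using unit convex by (intro add_mono mult_right_le_one_le) auto
  moreover have "0 \<le> real z * (r * a + (1 - r) * b) + real g * c + real w * e"
    using unit convex by simp
  moreover have "comparison_mgf r d N (Suc k) z g w = (real z * (r * a + (1 - r) * b) + real g * c + real w * e) / real N"
    unfolding comparison_mgf_Suc[OF assms(1)] a_def b_def c_def e_def by simp
  ultimately show ?case using assms(1) by (simp add: divide_le_eq_1)
qed

lemma comparison_mgf_mono:
  assumes "N \<ge> 1" "0 \<le> r" "r \<le> 1" "0 \<le> d" "d \<le> 1"
  shows "comparison_mgf r d N k z (g + 1) w \<le> comparison_mgf r d N k z g (w + 1)"
proof (induction k arbitrary: z g w)
  case 0
  then show ?case using assms by (simp add: comparison_mgf_0 mult_left_le_one_le)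
next
  case (Suc k)
  let ?U = "comparison_mgf r d N k"
  have untouched: "real z * (r * ?U (z - 1) (g + 2) w + (1 - r) * ?U (z - 1) (g + 1) (w + 1))
      \<le> real z * (r * ?U (z - 1) (g + 1) (w + 1) + (1 - r) * ?U (z - 1) g (w + 2))"
    using Suc.IH[of "z - 1" "g + 1" w] Suc.IH[of "z - 1" g "w + 1"] assms
    by (intro mult_left_mono add_mono) (auto simp: numeral_2_eq_2)
  have good: "real g * ?U z g (w + 1) \<le> real g * ?U z (g - 1) (w + 2)"
    using Suc.IH[of z "g - 1" "w + 1"] by (cases g) (auto simp: numeral_2_eq_2)
  have lost: "real w * ?U z (g + 1) w \<le> real w * ?U z g (w + 1)"
    using Suc.IH[of z g w] by (intro mult_left_mono) auto
  show ?case
    unfolding comparison_mgf_Suc[OF assms(1)] using assms(1) untouched good lost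
    by (intro divide_right_mono) (auto simp: numeral_2_eq_2 algebra_simps)
qed

lemma comparison_mgf_poisson_sums:
  assumes "N \<ge> 1"
  shows "(\<lambda>k. pmf (poisson_pmf (real N)) k * comparison_mgf r d N k N 0 0) sums (1 - r * d / exp 1) ^ N"
proof -
  let ?c = "\<lambda>k. (deriv ^^ k) (comparison_gf r d N 0 0) 0"
  have taylor: "(\<lambda>k. ?c k / fact k * (1 - 0) ^ k) sums comparison_gf r d N 0 0 1"
    by (rule holomorphic_power_series[where r=2]) (auto intro: holomorphic_intros)
  have coeff: "Re (?c k / fact k * (1 - 0) ^ k) = Re (?c k) / fact k" for k
    by (metis Re_divide_of_real mult_1_right of_real_fact power_one diff_zero)
  have "comparison_gf r d N 0 0 1 = of_real ((exp 1 - r * d) ^ N)"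
    by (simp add: comparison_gf_def of_real_exp)
  then have at_one: "Re (comparison_gf r d N 0 0 1) = (exp 1 - r * d) ^ N"
    by simp
  have "(\<lambda>k. Re (?c k) / fact k) sums (exp 1 - r * d) ^ N"
    using sums_Re[OF taylor] unfolding coeff at_one .
  then have "(\<lambda>k. exp (- real N) * (Re (?c k) / fact k)) sums (exp (- real N) * (exp 1 - r * d) ^ N)"
    by (rule sums_mult)
  moreover have "exp (- real N) * (exp 1 - r * d) ^ N = (exp (- 1) * (exp 1 - r * d)) ^ N"
    by (simp add: power_mult_distrib flip: exp_of_nat_mult)
  moreover have "exp (- 1) * (exp 1 - r * d) = 1 - r * d / exp 1"
    by (simp add: exp_minus field_simps)
  moreover have "pmf (poisson_pmf (real N)) k * comparison_mgf r d N k N 0 0 = exp (- real N) * (Re (?c k) / fact k)" for k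
    using assms by (simp add: comparison_mgf_def)
  ultimately show ?thesis by simp
qed

lemma integral_poisson_comparison_mgf:
  assumes "N \<ge> 1" "0 \<le> r" "r \<le> 1" "0 \<le> d" "d \<le> 1"
  shows "(\<integral>k. comparison_mgf r d N k N 0 0 \<partial>poisson_pmf (real N)) = (1 - r * d / exp 1) ^ N"
proof -
  note sums = comparison_mgf_poisson_sums[OF assms(1), of r d]
  have "integrable (count_space UNIV) (\<lambda>k. pmf (poisson_pmf (real N)) k * comparison_mgf r d N k N 0 0)"
    unfolding integrable_count_space_nat_iff using sums_summable[OF sums] comparison_mgf_bounds[OF assms]
    by simp
  then have "(\<integral>k. comparison_mgf r d N k N 0 0 \<partial>poisson_pmf (real N))
      = (\<Sum>k. pmf (poisson_pmf (real N)) k * comparison_mgf r d N k N 0 0)"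
    unfolding measure_pmf_eq_density by (simp add: integral_density integral_count_space_nat)
  then show ?thesis using sums by (simp add: sums_iff)
qed

lemma tick_pmf_support: "m' \<in> set_pmf (tick_pmf N K \<mu> p m i) \<Longrightarrow> m' = m(i := m' i)"
  unfolding tick_pmf_def by (auto split: if_splits)

text \<open>A tagged configuration records, besides the memories, how often each clock has ticked.\<close>

type_synonym tagged_config = "config \<times> (nat \<Rightarrow> nat)"

definition untouched :: "nat \<Rightarrow> tagged_config \<Rightarrow> nat" where
  "untouched N a = card {i. i < N \<and> snd a i = 0}"

definition single_tick_winners :: "nat \<Rightarrow> tagged_config \<Rightarrow> nat" where
  "single_tick_winners N a = card {i. i < N \<and> snd a i = 1 \<and> fst a i = 1}"

definition untouched_empty_memory :: "tagged_config \<Rightarrow> bool" where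
  "untouched_empty_memory a \<longleftrightarrow> (\<forall>i. snd a i = 0 \<longrightarrow> fst a i = 0)"

lemma untouched_add_winners_le: "untouched N a + single_tick_winners N a \<le> N"
proof -
  have "untouched N a + single_tick_winners N a
      = card ({i. i < N \<and> snd a i = 0} \<union> {i. i < N \<and> snd a i = 1 \<and> fst a i = 1})"
    unfolding untouched_def single_tick_winners_def by (rule card_Un_disjoint[symmetric]) auto
  also have "\<dots> \<le> card {..<N}" by (rule card_mono) auto
  finally show ?thesis by simp
qed

lemma untouched_tick:
  assumes "i < N"
  shows "untouched N (m(i := x), c(i := Suc (c i)))
    = (if c i = 0 then untouched N (m, c) - 1 else untouched N (m, c))"
proof -
  have "{j. j < N \<and> (c(i := Suc (c i))) j = 0} = {j. j < N \<and> c j = 0} - {i}" by auto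
  then show ?thesis unfolding untouched_def using assms by (simp add: card_Diff_singleton_if)
qed

lemma single_tick_winners_tick:
  assumes "i < N"
  shows "single_tick_winners N (m(i := x), c(i := Suc (c i))) =
    (if c i = 0 then (if x = 1 then single_tick_winners N (m, c) + 1 else single_tick_winners N (m, c))
     else if c i = 1 \<and> m i = 1 then single_tick_winners N (m, c) - 1 else single_tick_winners N (m, c))"
proof -
  define S where "S = {j. j < N \<and> c j = 1 \<and> m j = 1}"
  have "finite S" unfolding S_def by auto
  have new: "{j. j < N \<and> (c(i := Suc (c i))) j = 1 \<and> (m(i := x)) j = 1} =
      (if c i = 0 \<and> x = 1 then insert i S else S - {i})"
    unfolding S_def using assms by auto
  then have after: "single_tick_winners N (m(i := x), c(i := Suc (c i)))
      = card (if c i = 0 \<and> x = 1 then insert i S else S - {i})"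
    unfolding single_tick_winners_def by simp
  have before: "single_tick_winners N (m, c) = card S"
    unfolding single_tick_winners_def S_def by simp
  have "i \<in> S \<longleftrightarrow> c i = 1 \<and> m i = 1" unfolding S_def using assms by auto
  then show ?thesis
    unfolding after before using \<open>finite S\<close> by (auto simp: card_Diff_singleton_if card_insert_if)
qed

lemma sum_tick_classes:
  fixes t0 t1 t2 :: real
  shows "(\<Sum>i<N. if c i = 0 then t0 else if c i = 1 \<and> m i = 1 then t1 else t2)
    = real (untouched N (m, c)) * t0 + real (single_tick_winners N (m, c)) * t1
      + real (N - untouched N (m, c) - single_tick_winners N (m, c)) * t2"
proof -
  have count: "(\<Sum>i<N. if P i then t else 0) = real (card {i. i < N \<and> P i}) * t" for P and t :: real
    by (simp add: sum.If_cases Int_def conj_commute)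
  have "(\<Sum>i<N. if c i = 0 then t0 else if c i = 1 \<and> m i = 1 then t1 else t2)
      = (\<Sum>i<N. t2 + (if c i = 0 then t0 - t2 else 0) + (if c i = 1 \<and> m i = 1 then t1 - t2 else 0))"
    by (intro sum.cong) auto
  also have "\<dots> = real N * t2 + real (untouched N (m, c)) * (t0 - t2)
      + real (single_tick_winners N (m, c)) * (t1 - t2)"
    by (simp add: sum.distrib count untouched_def single_tick_winners_def)
  finally show ?thesis
    using untouched_add_winners_le[of N "(m, c)"] by (simp add: of_nat_diff algebra_simps)
qed

locale learning_model =
  fixes N K :: nat and \<mu> :: real and p :: "nat \<Rightarrow> real"
  assumes N_ge_1: "N \<ge> 1" and K_ge_1: "K \<ge> 1"
    and mu_nonneg: "0 \<le> \<mu>" and mu_le_1: "\<mu> \<le> 1"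
    and p_bounds: "\<forall>k\<in>{1..K}. 0 \<le> p k \<and> p k \<le> 1"
begin

definition discovery_prob :: real where
  "discovery_prob = \<mu> * p 1 / real K"

lemma discovery_prob_nonneg: "0 \<le> discovery_prob"
  using mu_nonneg p_bounds K_ge_1 by (simp add: discovery_prob_def)

lemma discovery_prob_le_1: "discovery_prob \<le> 1"
proof -
  have "\<mu> * p 1 \<le> 1 * 1"
    using mu_nonneg mu_le_1 p_bounds K_ge_1 by (intro mult_mono) auto
  also have "\<dots> \<le> real K" using K_ge_1 by simp
  finally show ?thesis using K_ge_1 by (simp add: discovery_prob_def divide_le_eq_1)
qed

lemma integral_tick_le:
  fixes h :: "config \<Rightarrow> real"
  assumes "\<And>x. L \<le> h x" "\<And>x. h x \<le> B" and "m i = 0"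
  shows "integral\<^sup>L (tick_pmf N K \<mu> p m i) h \<le> B - discovery_prob * (B - h (m(i := 1)))"
proof -
  define reward where "reward c = (if c = 0 then return_pmf False else bernoulli_pmf (p c))" for c
  define \<phi> where "\<phi> c = (\<integral>b. h (if b then m(i := c) else m) \<partial>reward c)" for c
  define peer where "peer = map_pmf m (pmf_of_set {..<N})"
  have h_abs: "\<bar>h x\<bar> \<le> \<bar>L\<bar> + \<bar>B\<bar>" for x
    using assms(1,2)[of x] by linarith
  have \<phi>_bounds: "L \<le> \<phi> c" "\<phi> c \<le> B" for c
    unfolding \<phi>_def using assms(1,2) by (auto intro: integral_measure_pmf_ge_bound integral_measure_pmf_le_bound)
  then have \<phi>_abs: "\<bar>\<phi> c\<bar> \<le> \<bar>L\<bar> + \<bar>B\<bar>" for c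
    by (smt (verit))
  have "tick_pmf N K \<mu> p m i
      = bind_pmf (choice_pmf N K \<mu> m i) (\<lambda>c. map_pmf (\<lambda>b. if b then m(i := c) else m) (reward c))"
    unfolding tick_pmf_def reward_def map_pmf_def by simp
  then have "integral\<^sup>L (tick_pmf N K \<mu> p m i) h = integral\<^sup>L (choice_pmf N K \<mu> m i) \<phi>"
    unfolding \<phi>_def by (simp add: integral_bind_pmf_bounded[OF h_abs])
  also have "\<dots> = (\<Sum>c\<in>{1..K}. \<phi> c) / real K * \<mu> + integral\<^sup>L peer \<phi> * (1 - \<mu>)"
    using \<open>m i = 0\<close> mu_nonneg mu_le_1 K_ge_1
    by (simp add: choice_pmf_def peer_def[symmetric] integral_bind_pmf_bounded[OF \<phi>_abs]
        integral_pmf_of_set)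
  also have "\<dots> \<le> (p 1 * h (m(i := 1)) + (1 - p 1) * B + (real K - 1) * B) / real K * \<mu> + B * (1 - \<mu>)"
  proof -
    have "\<phi> 1 = p 1 * h (m(i := 1)) + (1 - p 1) * h m"
      using p_bounds K_ge_1 by (simp add: \<phi>_def reward_def)
    also have "\<dots> \<le> p 1 * h (m(i := 1)) + (1 - p 1) * B"
      using p_bounds K_ge_1 assms(2) by (intro add_left_mono mult_left_mono) auto
    finally have "\<phi> 1 \<le> p 1 * h (m(i := 1)) + (1 - p 1) * B" .
    moreover have "(\<Sum>c\<in>{1..K} - {1}. \<phi> c) \<le> (real K - 1) * B"
      using sum_mono[of "{1..K} - {1}" \<phi> "\<lambda>_. B"] \<phi>_bounds K_ge_1 by simp
    moreover have "(\<Sum>c\<in>{1..K}. \<phi> c) = \<phi> 1 + (\<Sum>c\<in>{1..K} - {1}. \<phi> c)"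
      using K_ge_1 by (subst sum.remove[of _ 1]) auto
    moreover have "integral\<^sup>L peer \<phi> \<le> B"
      using \<phi>_bounds by (rule integral_measure_pmf_le_bound)
    ultimately show ?thesis
      using mu_nonneg mu_le_1 K_ge_1 by (intro add_mono mult_right_mono divide_right_mono) auto
  qed
  also have "\<dots> = B - discovery_prob * (B - h (m(i := 1)))"
    using K_ge_1 by (simp add: discovery_prob_def field_simps)
  finally show ?thesis .
qed

definition tagged_jump :: "tagged_config \<Rightarrow> tagged_config pmf" where
  "tagged_jump a = bind_pmf (pmf_of_set {..<N})
     (\<lambda>i. map_pmf (\<lambda>m'. (m', (snd a)(i := Suc (snd a i)))) (tick_pmf N K \<mu> p (fst a) i))"

definition tagged_mgf :: "real \<Rightarrow> nat \<Rightarrow> tagged_config \<Rightarrow> real" where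
  "tagged_mgf d k a = comparison_mgf discovery_prob d N k (untouched N a) (single_tick_winners N a)
     (N - untouched N a - single_tick_winners N a)"

lemma tagged_mgf_bounds:
  assumes "0 \<le> d" "d \<le> 1"
  shows "0 \<le> tagged_mgf d k a \<and> tagged_mgf d k a \<le> 1"
  unfolding tagged_mgf_def using untouched_add_winners_le[of N a]
  by (intro comparison_mgf_bounds N_ge_1 discovery_prob_nonneg discovery_prob_le_1 assms) auto

lemma tagged_mgf_0: "tagged_mgf d 0 a = (1 - d) ^ single_tick_winners N a"
  by (simp add: tagged_mgf_def comparison_mgf_0)

lemma integral_tagged_tick_le:
  fixes k :: nat
  assumes d: "0 \<le> d" "d \<le> 1" and "i < N" and untouched_empty: "c i = 0 \<longrightarrow> m i = 0"
  defines "U \<equiv> comparison_mgf discovery_prob d N k" and "Z \<equiv> untouched N (m, c)"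
    and "G \<equiv> single_tick_winners N (m, c)"
    and "W \<equiv> N - untouched N (m, c) - single_tick_winners N (m, c)"
  shows "(\<integral>m'. tagged_mgf d k (m', c(i := Suc (c i))) \<partial>tick_pmf N K \<mu> p m i) \<le>
    (if c i = 0 then discovery_prob * U (Z - 1) (G + 1) W + (1 - discovery_prob) * U (Z - 1) G (W + 1)
     else if c i = 1 \<and> m i = 1 then U Z (G - 1) (W + 1) else U Z G W)"
proof -
  define F where "F x = tagged_mgf d k (m(i := x), c(i := Suc (c i)))" for x
  have reduce: "(\<integral>m'. tagged_mgf d k (m', c(i := Suc (c i))) \<partial>tick_pmf N K \<mu> p m i)
      = (\<integral>m'. F (m' i) \<partial>tick_pmf N K \<mu> p m i)"
    unfolding F_def by (intro integral_cong_AE) (auto simp: AE_measure_pmf_iff dest: tick_pmf_support)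
  have F: "F x = U (if c i = 0 then Z - 1 else Z)
      (if c i = 0 then (if x = 1 then G + 1 else G) else if c i = 1 \<and> m i = 1 then G - 1 else G)
      (N - (if c i = 0 then Z - 1 else Z) -
        (if c i = 0 then (if x = 1 then G + 1 else G) else if c i = 1 \<and> m i = 1 then G - 1 else G))" for x
    unfolding F_def tagged_mgf_def untouched_tick[OF \<open>i < N\<close>] single_tick_winners_tick[OF \<open>i < N\<close>]
      U_def Z_def G_def by simp
  have ZG: "Z + G \<le> N" unfolding Z_def G_def by (rule untouched_add_winners_le)
  have W: "W = N - Z - G" unfolding W_def Z_def G_def ..
  have counted: "1 \<le> card {j. j < N \<and> P j}" if "P i" for P
  proof -
    have "{j. j < N \<and> P j} \<noteq> {}" using that \<open>i < N\<close> by auto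
    then show ?thesis by (simp add: Suc_le_eq card_gt_0_iff)
  qed
  consider "c i = 0" | "c i = 1 \<and> m i = 1" | "c i \<noteq> 0" "\<not> (c i = 1 \<and> m i = 1)" by blast
  then show ?thesis
  proof cases
    case 1
    then have "Z \<ge> 1" unfolding Z_def untouched_def using counted[of "\<lambda>j. c j = 0"] by simp
    then have F_cases: "F 1 = U (Z - 1) (G + 1) W" "x \<noteq> 1 \<Longrightarrow> F x = U (Z - 1) G (W + 1)" for x
      using 1 ZG unfolding F W by (simp_all add: Suc_diff_le)
    have "U (Z - 1) (G + 1) W \<le> U (Z - 1) G (W + 1)"
      unfolding U_def by (intro comparison_mgf_mono N_ge_1 discovery_prob_nonneg discovery_prob_le_1 d)
    then have "U (Z - 1) (G + 1) W \<le> F x" "F x \<le> U (Z - 1) G (W + 1)" for x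
      using F_cases by (cases "x = 1"; simp)+
    from integral_tick_le[where h="\<lambda>m'. F (m' i)" and m=m and i=i, OF this] untouched_empty 1
    have "(\<integral>m'. F (m' i) \<partial>tick_pmf N K \<mu> p m i)
        \<le> U (Z - 1) G (W + 1) - discovery_prob * (U (Z - 1) G (W + 1) - F 1)"
      by simp
    with 1 F_cases reduce show ?thesis by (simp add: algebra_simps)
  next
    case 2
    then have "G \<ge> 1"
      unfolding G_def single_tick_winners_def using counted[of "\<lambda>j. c j = 1 \<and> m j = 1"] by simp
    then have "F x = U Z (G - 1) (W + 1)" for x using 2 ZG unfolding F W by (simp add: Suc_diff_le)
    with 2 reduce show ?thesis by simp
  next
    case 3
    then have "F x = U Z G W" for x unfolding F W by auto
    with 3 reduce show ?thesis by auto
  qed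
qed

lemma integral_tagged_jump_le:
  assumes d: "0 \<le> d" "d \<le> 1" and "untouched_empty_memory (m, c)"
  shows "integral\<^sup>L (tagged_jump (m, c)) (tagged_mgf d k) \<le> tagged_mgf d (Suc k) (m, c)"
proof -
  let ?U = "comparison_mgf discovery_prob d N k" and ?Z = "untouched N (m, c)"
    and ?G = "single_tick_winners N (m, c)"
  let ?W = "N - ?Z - ?G" and ?r = discovery_prob
  have "\<bar>tagged_mgf d k a\<bar> \<le> 1" for a
    using tagged_mgf_bounds[OF d] by (simp add: abs_le_iff)
  then have "integral\<^sup>L (tagged_jump (m, c)) (tagged_mgf d k)
      = (\<Sum>i<N. \<integral>m'. tagged_mgf d k (m', c(i := Suc (c i))) \<partial>tick_pmf N K \<mu> p m i) / real N"
    unfolding tagged_jump_def using N_ge_1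
    by (subst integral_bind_pmf_bounded[where B=1]) (auto simp: integral_pmf_of_set lessThan_empty_iff)
  also have "\<dots> \<le> (\<Sum>i<N. if c i = 0 then ?r * ?U (?Z - 1) (?G + 1) ?W + (1 - ?r) * ?U (?Z - 1) ?G (?W + 1)
      else if c i = 1 \<and> m i = 1 then ?U ?Z (?G - 1) (?W + 1) else ?U ?Z ?G ?W) / real N"
    using assms(3) by (intro divide_right_mono sum_mono integral_tagged_tick_le d)
      (auto simp: untouched_empty_memory_def)
  also have "\<dots> = tagged_mgf d (Suc k) (m, c)"
    unfolding sum_tick_classes tagged_mgf_def comparison_mgf_Suc[OF N_ge_1] by simp
  finally show ?thesis .
qed

lemma untouched_empty_memory_tagged_jump:
  assumes "a' \<in> set_pmf (tagged_jump a)" "untouched_empty_memory a"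
  shows "untouched_empty_memory a'"
proof -
  obtain i m' where m': "m' \<in> set_pmf (tick_pmf N K \<mu> p (fst a) i)"
    and a': "a' = (m', (snd a)(i := Suc (snd a i)))"
    using assms(1) unfolding tagged_jump_def by auto
  have "m' = (fst a)(i := m' i)" by (rule tick_pmf_support[OF m'])
  then show ?thesis
    using assms(2) a' unfolding untouched_empty_memory_def
    by (metis fun_upd_other fun_upd_same fst_conv snd_conv nat.distinct(1))
qed

definition tagged_jumps :: "nat \<Rightarrow> tagged_config pmf \<Rightarrow> tagged_config pmf" where
  "tagged_jumps n D = ((\<lambda>D. bind_pmf D tagged_jump) ^^ n) D"

lemma integral_tagged_jumps_le:
  assumes d: "0 \<le> d" "d \<le> 1" and "\<forall>a\<in>set_pmf D. untouched_empty_memory a"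
  shows "(\<integral>a. (1 - d) ^ single_tick_winners N a \<partial>tagged_jumps k D) \<le> integral\<^sup>L D (tagged_mgf d k)"
  using assms(3)
proof (induction k arbitrary: D)
  case 0
  then show ?case by (simp add: tagged_jumps_def tagged_mgf_0)
next
  case (Suc k)
  have unit: "0 \<le> tagged_mgf d k a" "tagged_mgf d k a \<le> 1" for k a
    using tagged_mgf_bounds[OF d] by auto
  then have abs_unit: "\<bar>tagged_mgf d k a\<bar> \<le> 1" for k a
    by (simp add: abs_le_iff)
  have "tagged_jumps (Suc k) D = tagged_jumps k (bind_pmf D tagged_jump)"
    unfolding tagged_jumps_def by (simp add: funpow_Suc_right del: funpow.simps)
  moreover have "\<forall>a\<in>set_pmf (bind_pmf D tagged_jump). untouched_empty_memory a"
    using Suc.prems untouched_empty_memory_tagged_jump by fastforce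
  ultimately have "(\<integral>a. (1 - d) ^ single_tick_winners N a \<partial>tagged_jumps (Suc k) D)
      \<le> integral\<^sup>L (bind_pmf D tagged_jump) (tagged_mgf d k)"
    using Suc.IH by simp
  also have "\<dots> = (\<integral>a. integral\<^sup>L (tagged_jump a) (tagged_mgf d k) \<partial>D)"
    by (rule integral_bind_pmf_bounded[OF abs_unit])
  also have "\<dots> \<le> integral\<^sup>L D (tagged_mgf d (Suc k))"
  proof (rule integral_measure_pmf_mono[where B=1])
    fix a assume "a \<in> set_pmf D"
    with Suc.prems show "integral\<^sup>L (tagged_jump a) (tagged_mgf d k) \<le> tagged_mgf d (Suc k) a"
      using integral_tagged_jump_le[OF d, of "fst a" "snd a"] by simp
  next
    fix a
    show "\<bar>integral\<^sup>L (tagged_jump a) (tagged_mgf d k)\<bar> \<le> 1"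
      using integral_measure_pmf_ge_bound[OF unit(1)[of k] unit(2)[of k], of "tagged_jump a"]
        integral_measure_pmf_le_bound[OF unit(1)[of k] unit(2)[of k], of "tagged_jump a"]
      by simp
  qed (rule abs_unit)
  finally show ?case .
qed

lemma tagged_jumps_forget_tags:
  "map_pmf fst (tagged_jumps n (return_pmf (init_config, \<lambda>_. 0))) = jumps_pmf N K \<mu> p n"
proof (induction n)
  case 0
  then show ?case by (simp add: tagged_jumps_def jumps_pmf_def)
next
  case (Suc n)
  have "map_pmf fst (tagged_jump a) = jump_pmf N K \<mu> p (fst a)" for a
    unfolding tagged_jump_def jump_pmf_def map_bind_pmf by (simp add: pmf.map_comp o_def)
  with Suc show ?case
    unfolding tagged_jumps_def jumps_pmf_def by (simp add: map_bind_pmf bind_map_pmf[symmetric])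
qed

lemma integral_jumps_le:
  assumes d: "0 \<le> d" "d \<le> 1"
  shows "(\<integral>m. (1 - d) ^ Xcount N 1 m \<partial>jumps_pmf N K \<mu> p n)
    \<le> comparison_mgf discovery_prob d N n N 0 0"
proof -
  let ?D = "tagged_jumps n (return_pmf (init_config, \<lambda>_. 0))"
  have "(\<integral>m. (1 - d) ^ Xcount N 1 m \<partial>jumps_pmf N K \<mu> p n)
      = (\<integral>a. (1 - d) ^ Xcount N 1 (fst a) \<partial>?D)"
    by (simp flip: tagged_jumps_forget_tags)
  also have "\<dots> \<le> (\<integral>a. (1 - d) ^ single_tick_winners N a \<partial>?D)"
  proof (rule integral_measure_pmf_mono[where B=1])
    fix a
    have "single_tick_winners N a \<le> Xcount N 1 (fst a)"
      unfolding single_tick_winners_def Xcount_def by (rule card_mono) auto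
    then show "(1 - d) ^ Xcount N 1 (fst a) \<le> (1 - d) ^ single_tick_winners N a"
      using d by (intro power_decreasing) auto
  qed (use d in \<open>simp_all add: power_le_one\<close>)
  also have "\<dots> \<le> tagged_mgf d n (init_config, \<lambda>_. 0)"
    using integral_tagged_jumps_le[OF d, of "return_pmf (init_config, \<lambda>_. 0)" n]
    by (simp add: untouched_empty_memory_def init_config_def integral_return_pmf_real)
  also have "\<dots> = comparison_mgf discovery_prob d N n N 0 0"
    by (simp add: tagged_mgf_def untouched_def single_tick_winners_def)
  finally show ?thesis .
qed

lemma integral_poisson_jumps_le:
  assumes d: "0 \<le> d" "d \<le> 1"
  shows "(\<integral>m. (1 - d) ^ Xcount N 1 m \<partial>bind_pmf (poisson_pmf (real N)) (jumps_pmf N K \<mu> p))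
    \<le> exp (- discovery_prob / exp 1 * d * real N)"
proof -
  note r = discovery_prob_nonneg discovery_prob_le_1
  have unit: "0 \<le> comparison_mgf discovery_prob d N n N 0 0"
    "comparison_mgf discovery_prob d N n N 0 0 \<le> 1" for n
    using comparison_mgf_bounds[OF N_ge_1 r d, of N 0 0] by auto
  have power_unit: "\<bar>(1 - d) ^ j\<bar> \<le> 1" for j :: nat
    using d by (simp add: power_le_one)
  have "(\<integral>m. (1 - d) ^ Xcount N 1 m \<partial>bind_pmf (poisson_pmf (real N)) (jumps_pmf N K \<mu> p))
      = (\<integral>n. (\<integral>m. (1 - d) ^ Xcount N 1 m \<partial>jumps_pmf N K \<mu> p n) \<partial>poisson_pmf (real N))"
    by (rule integral_bind_pmf_bounded[OF power_unit])
  also have "\<dots> \<le> (\<integral>n. comparison_mgf discovery_prob d N n N 0 0 \<partial>poisson_pmf (real N))"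
  proof (rule integral_measure_pmf_mono[where B=1])
    fix n
    have "0 \<le> (\<integral>m. (1 - d) ^ Xcount N 1 m \<partial>jumps_pmf N K \<mu> p n)"
      "(\<integral>m. (1 - d) ^ Xcount N 1 m \<partial>jumps_pmf N K \<mu> p n) \<le> 1"
      using d by (auto simp: power_le_one
          intro!: integral_measure_pmf_ge_bound[where B=1] integral_measure_pmf_le_bound[where L=0])
    then show "\<bar>\<integral>m. (1 - d) ^ Xcount N 1 m \<partial>jumps_pmf N K \<mu> p n\<bar> \<le> 1" by simp
  qed (use unit integral_jumps_le[OF d] in auto)
  also have "\<dots> = (1 - discovery_prob * d / exp 1) ^ N"
    by (rule integral_poisson_comparison_mgf[OF N_ge_1 r d])
  also have "\<dots> \<le> exp (- (discovery_prob * d / exp 1)) ^ N"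
  proof (rule power_mono)
    have "discovery_prob * d \<le> 1 * 1" using r d by (intro mult_mono) auto
    then show "0 \<le> 1 - discovery_prob * d / exp 1"
      by (smt (verit, best) divide_le_eq_1 exp_gt_one)
  qed (rule exp_ge_add_one_self[of "- _", simplified])
  also have "\<dots> = exp (- discovery_prob / exp 1 * d * real N)"
    by (simp add: mult.commute flip: exp_of_nat_mult)
  finally show ?thesis .
qed

end

lemma chernoff_exponent_le:
  fixes q n \<delta> :: real
  assumes "0 \<le> q" "0 \<le> n" "0 < \<delta>" "\<delta> < 1"
  shows "exp (- q * \<delta> * n) / (1 - \<delta>) powr ((1 - \<delta>) * q * n) \<le> exp (- q * (\<delta>\<^sup>2 / 2) * n)"
proof -
  have "exp (- q * \<delta> * n) / (1 - \<delta>) powr ((1 - \<delta>) * q * n)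
      = exp (- (q * n) * (\<delta> + (1 - \<delta>) * ln (1 - \<delta>)))"
    using assms by (simp add: powr_def algebra_simps flip: exp_diff)
  also have "\<dots> \<le> exp (- (q * n) * (\<delta>\<^sup>2 / 2))"
  proof -
    have "q * n * (\<delta>\<^sup>2 / 2) \<le> q * n * (\<delta> + (1 - \<delta>) * ln (1 - \<delta>))"
      using entropy_lower_bound[of \<delta>] assms by (intro mult_left_mono) auto
    then show ?thesis by simp
  qed
  finally show ?thesis by (simp add: algebra_simps)
qed

theorem lemma2:
  fixes N K :: nat and \<mu> rate \<delta> :: real and p :: "nat \<Rightarrow> real"
  assumes "K \<ge> 2" and "N \<ge> 1"
    and "\<forall>k\<in>{1..K}. 0 \<le> p k \<and> p k \<le> 1"
    and "p 1 > p 2"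
    and "\<forall>k\<in>{2..<K}. p (k + 1) \<le> p k"
    and "rate > 0" and "0 < \<mu>" and "\<mu> \<le> 1"
    and "0 < \<delta>" and "\<delta> < 1"
  shows "measure_pmf.prob (config_at N K \<mu> p rate (1 / rate))
           {m. real (Xcount N 1 m) \<ge> (1 - \<delta>) * (\<mu> * p 1 / (real K * exp 1)) * real N}
         \<ge> 1 - exp (- (\<mu> * p 1 / (real K * exp 1)) * (\<delta>\<^sup>2 / 2) * real N)"
proof -
  interpret learning_model N K \<mu> p
    using assms by unfold_locales auto
  define q where "q = \<mu> * p 1 / (real K * exp 1)"
  have q: "q = discovery_prob / exp 1"
    by (simp add: q_def discovery_prob_def)
  define P where "P = config_at N K \<mu> p rate (1 / rate)"
  have P: "P = bind_pmf (poisson_pmf (real N)) (jumps_pmf N K \<mu> p)"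
    using \<open>rate > 0\<close> by (simp add: P_def config_at_def)
  define A where "A = (1 - \<delta>) * q * real N"
  have "measure_pmf.prob P {m. real (Xcount N 1 m) < A}
      \<le> (\<integral>m. (1 - \<delta>) ^ Xcount N 1 m \<partial>P) / (1 - \<delta>) powr A"
    using assms by (intro prob_less_le_power_moment) auto
  also have "\<dots> \<le> exp (- q * \<delta> * real N) / (1 - \<delta>) powr A"
    using integral_poisson_jumps_le[of \<delta>] assms unfolding P q by (intro divide_right_mono) auto
  also have "\<dots> \<le> exp (- q * (\<delta>\<^sup>2 / 2) * real N)"
    unfolding A_def using assms discovery_prob_nonneg q by (intro chernoff_exponent_le) auto
  finally have "measure_pmf.prob P {m. real (Xcount N 1 m) < A} \<le> exp (- q * (\<delta>\<^sup>2 / 2) * real N)" .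
  moreover have "measure_pmf.prob P {m. A \<le> real (Xcount N 1 m)}
      = 1 - measure_pmf.prob P {m. real (Xcount N 1 m) < A}"
    using measure_pmf.prob_compl[of "{m. real (Xcount N 1 m) < A}" P] by (simp add: set_diff_eq not_less)
  ultimately show ?thesis
    unfolding P_def A_def q_def by simp
qed

end
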